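(* For real $\alpha<0$ and real $t>1$, \[ \mathbb E\bigl(|\mathcal T|-1+t\bigr)^{\alpha}=(t-1)^{\alpha}\int_0^1\Bigl[1-\frac{c(\eta;-\alpha,t)}{\Gamma(-\alpha)}\Bigr]\,d\eta, \qquad c(\eta;-\alpha,t):=\int_{(t-1)\log R(\eta)}^{\infty}v^{-\alpha-1}e^{-v}\,dv . \]
   Context: Let $\xi$ be a random variable with values in $\{0,1,2,\dots\}$ with $\mathbb E\xi=1$ and $0<\operatorname{Var}\xi<\infty$, with probability generating function $\Phi(t)=\mathbb E t^\xi$, and let $\mathcal T$ be a Galton–Watson tree with offspring distribution $\xi$, $|\mathcal T|$ its number of vertices. For $\eta\in(0,1]$, $R(\eta):=\Phi(\eta)/\eta\in[1,\infty)$. *)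

theory Defs
  imports "HOL-Probability.Probability"
begin

text \<open>Galton--Watson tree in the Ulam--Harris encoding: vertices are finite
sequences of natural numbers; each potential vertex u carries an i.i.d. number
of children omega u with law p (offspring distribution).\<close>

definition gw_space :: "nat pmf \<Rightarrow> (nat list \<Rightarrow> nat) measure" where
  "gw_space p = PiM UNIV (\<lambda>_. measure_pmf p)"

definition gw_tree :: "(nat list \<Rightarrow> nat) \<Rightarrow> nat list set" where
  "gw_tree \<omega> = {u. \<forall>i<length u. u ! i < \<omega> (take i u)}"

definition pgf :: "nat pmf \<Rightarrow> real \<Rightarrow> real" where
  "pgf p \<eta> = measure_pmf.expectation p (\<lambda>k. \<eta> ^ k)"

definition gw_R :: "nat pmf \<Rightarrow> real \<Rightarrow> real" where
  "gw_R p \<eta> = pgf p \<eta> / \<eta>"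

definition gw_c :: "nat pmf \<Rightarrow> real \<Rightarrow> real \<Rightarrow> real \<Rightarrow> real" where
  "gw_c p \<eta> a t = (LBINT v=ereal ((t - 1) * ln (gw_R p \<eta>))..\<infinity>. v powr (a - 1) * exp (- v))"

end

theory Submission
  imports Defs
begin

text \<open>Write \<open>N = |T|\<close>, \<open>a = -\<alpha>\<close>, \<open>b = t - 1\<close> and \<open>F(x) = E x\<^sup>N\<close> (finite trees only).
  By the Gamma integral, \<open>\<Gamma>(a) E (N + b) powr (-a) = \<integral>\<^sub>0\<^sup>\<infinity> s powr (a - 1) e\<^sup>-\<^sup>b\<^sup>s F(e\<^sup>-\<^sup>s) ds\<close>.
  Decomposing the tree at the root, whose subtrees are independent copies of the whole tree,
  gives \<open>F(x) = x \<Phi>(F(x))\<close>; convexity of \<open>\<Phi>\<close> then shows that \<open>F(e\<^sup>-\<^sup>s)\<close> is the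
  Lebesgue measure of the level set \<open>{\<eta> \<in> (0,1]. log R(\<eta>) > s}\<close>. Exchanging the two
  integrals turns the right-hand side into \<open>\<integral>\<^sub>0\<^sup>1 b powr (-a) \<gamma>(a, b log R(\<eta>)) d\<eta>\<close>, and the
  lower incomplete Gamma function \<open>\<gamma>\<close> is \<open>\<Gamma>(a) - c\<close>.\<close>

section \<open>The tree and its decomposition at the root\<close>

lemma measurable_gw_tree_member [measurable]:
  "Measurable.pred (gw_space p) (\<lambda>\<omega>. u \<in> gw_tree \<omega>)"
  unfolding gw_tree_def gw_space_def by simp

lemma pred_gw_tree_finite_card:
  "Measurable.pred (gw_space p) (\<lambda>\<omega>. finite (gw_tree \<omega>) \<and> card (gw_tree \<omega>) = n)"
proof -
  have countable: "countable {S :: nat list set. finite S \<and> card S = n}"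
    by (rule countable_subset[OF _ countable_Collect_finite]) auto
  have "(\<lambda>\<omega>. finite (gw_tree \<omega>) \<and> card (gw_tree \<omega>) = n) =
        (\<lambda>\<omega>. \<exists>S\<in>{S. finite S \<and> card S = n}. \<forall>u. (u \<in> gw_tree \<omega>) = (u \<in> S))"
    by (auto simp: fun_eq_iff) (metis set_eqI)+
  then show ?thesis
    by (simp only:) (intro measurable_pred_countable[OF countable] pred_intros_countable; measurable)
qed

lemma pred_gw_tree_finite: "Measurable.pred (gw_space p) (\<lambda>\<omega>. finite (gw_tree \<omega>))"
proof -
  have "(\<lambda>\<omega>. finite (gw_tree \<omega>)) = (\<lambda>\<omega>. \<exists>n. finite (gw_tree \<omega>) \<and> card (gw_tree \<omega>) = n)"
    by auto
  then show ?thesis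
    using pred_gw_tree_finite_card by (simp only:) (intro pred_intros_countable, blast)
qed

definition gw_size :: "(nat list \<Rightarrow> nat) \<Rightarrow> nat option" where
  "gw_size \<omega> = (if finite (gw_tree \<omega>) then Some (card (gw_tree \<omega>)) else None)"

lemma measurable_gw_size: "gw_size \<in> gw_space p \<rightarrow>\<^sub>M count_space UNIV"
proof (subst measurable_count_space_eq2_countable, safe)
  fix k :: "nat option"
  show "gw_size -` {k} \<inter> space (gw_space p) \<in> sets (gw_space p)"
  proof (cases k)
    case None
    then have "gw_size -` {k} \<inter> space (gw_space p) = {\<omega>\<in>space (gw_space p). \<not> finite (gw_tree \<omega>)}"
      by (auto simp: gw_size_def split: if_splits)
    then show ?thesis using pred_gw_tree_finite by (simp add: pred_def)
  next
    case (Some n)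
    then have "gw_size -` {k} \<inter> space (gw_space p) =
               {\<omega>\<in>space (gw_space p). finite (gw_tree \<omega>) \<and> card (gw_tree \<omega>) = n}"
      by (auto simp: gw_size_def split: if_splits)
    then show ?thesis using pred_gw_tree_finite_card[where p=p and n=n] by (simp add: pred_def)
  qed
qed auto

lemma borel_measurable_if_finite_gw_tree:
  fixes G :: "nat \<Rightarrow> 'a \<Rightarrow> real"
  assumes \<pi>: "\<pi> \<in> N \<rightarrow>\<^sub>M gw_space p" and G: "\<And>n. G n \<in> borel_measurable N"
  shows "(\<lambda>x. if finite (gw_tree (\<pi> x)) then G (card (gw_tree (\<pi> x))) x else 0) \<in> borel_measurable N"
proof -
  define Q where "Q = (\<lambda>k y. case k of None \<Rightarrow> 0 | Some n \<Rightarrow> G n y)"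
  have "(\<lambda>x. Q ((gw_size \<circ> \<pi>) x) x) \<in> borel_measurable N"
  proof (rule measurable_compose_countable)
    show "Q k \<in> borel_measurable N" for k using G by (cases k) (auto simp: Q_def)
    show "gw_size \<circ> \<pi> \<in> N \<rightarrow>\<^sub>M count_space UNIV"
      using \<pi> measurable_gw_size by (rule measurable_comp)
  qed
  also have "(\<lambda>x. Q ((gw_size \<circ> \<pi>) x) x) =
             (\<lambda>x. if finite (gw_tree (\<pi> x)) then G (card (gw_tree (\<pi> x))) x else 0)"
    by (auto simp: fun_eq_iff Q_def gw_size_def)
  finally show ?thesis .
qed

lemma borel_measurable_gw_size_fun:
  fixes f :: "nat \<Rightarrow> real"
  shows "(\<lambda>\<omega>. if finite (gw_tree \<omega>) then f (card (gw_tree \<omega>)) else 0) \<in> borel_measurable (gw_space p)"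
  using borel_measurable_if_finite_gw_tree[of "\<lambda>\<omega>. \<omega>" "gw_space p" p "\<lambda>n \<omega>. f n"] by simp

definition gw_child :: "nat \<Rightarrow> (nat list \<Rightarrow> nat) \<Rightarrow> (nat list \<Rightarrow> nat)" where
  "gw_child i \<omega> = (\<lambda>v. \<omega> (i # v))"

lemma gw_tree_child_decomp:
  "gw_tree \<omega> = insert [] (\<Union>i<\<omega> []. Cons i ` gw_tree (gw_child i \<omega>))"
proof (intro set_eqI iffI)
  fix u assume u: "u \<in> gw_tree \<omega>"
  show "u \<in> insert [] (\<Union>i<\<omega> []. Cons i ` gw_tree (gw_child i \<omega>))"
  proof (cases u)
    case (Cons i v)
    have "i < \<omega> []" using u Cons by (auto simp: gw_tree_def)
    moreover have "v ! j < gw_child i \<omega> (take j v)" if "j < length v" for j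
      using u Cons that by (auto simp: gw_tree_def gw_child_def)
    then have "v \<in> gw_tree (gw_child i \<omega>)" by (simp add: gw_tree_def)
    ultimately show ?thesis using Cons by auto
  qed simp
next
  fix u assume "u \<in> insert [] (\<Union>i<\<omega> []. Cons i ` gw_tree (gw_child i \<omega>))"
  then show "u \<in> gw_tree \<omega>"
  proof (elim insertE UN_E imageE)
    fix i v assume "i \<in> {..<\<omega> []}" "v \<in> gw_tree (gw_child i \<omega>)" "u = i # v"
    then show ?thesis
      unfolding gw_tree_def by (auto simp: gw_child_def less_Suc_eq_0_disj gw_tree_def)
  qed (simp add: gw_tree_def)
qed

definition gw_pow :: "real \<Rightarrow> (nat list \<Rightarrow> nat) \<Rightarrow> real" where
  "gw_pow x \<omega> = (if finite (gw_tree \<omega>) then x ^ card (gw_tree \<omega>) else 0)"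

lemma gw_pow_child_decomp: "gw_pow x \<omega> = x * (\<Prod>i<\<omega> []. gw_pow x (gw_child i \<omega>))"
proof -
  define U where "U = (\<Union>i<\<omega> []. Cons i ` gw_tree (gw_child i \<omega>))"
  have T: "gw_tree \<omega> = insert [] U" unfolding U_def by (rule gw_tree_child_decomp)
  have "[] \<notin> U" unfolding U_def by auto
  have finite_iff: "finite (gw_tree \<omega>) \<longleftrightarrow> (\<forall>i<\<omega> []. finite (gw_tree (gw_child i \<omega>)))"
    unfolding T U_def by (auto simp: finite_image_iff)
  show ?thesis
  proof (cases "finite (gw_tree \<omega>)")
    case True
    then have fin: "\<And>i. i < \<omega> [] \<Longrightarrow> finite (gw_tree (gw_child i \<omega>))" using finite_iff by auto
    have "card U = (\<Sum>i<\<omega> []. card (gw_tree (gw_child i \<omega>)))"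
      unfolding U_def by (subst card_UN_disjoint) (auto simp: fin card_image)
    then have "card (gw_tree \<omega>) = Suc (\<Sum>i<\<omega> []. card (gw_tree (gw_child i \<omega>)))"
      using T \<open>[] \<notin> U\<close> True by simp
    then show ?thesis using True fin by (simp add: gw_pow_def power_sum)
  next
    case False
    then obtain i where "i < \<omega> []" "\<not> finite (gw_tree (gw_child i \<omega>))" using finite_iff by auto
    then have "(\<Prod>i<\<omega> []. gw_pow x (gw_child i \<omega>)) = 0"
      by (intro prod_zero) (auto simp: gw_pow_def)
    then show ?thesis using False by (simp add: gw_pow_def)
  qed
qed

lemma gw_pow_nonneg: "0 \<le> x \<Longrightarrow> 0 \<le> gw_pow x \<omega>"
  by (simp add: gw_pow_def)

lemma gw_pow_le_1: "0 \<le> x \<Longrightarrow> x \<le> 1 \<Longrightarrow> gw_pow x \<omega> \<le> 1"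
  by (simp add: gw_pow_def power_le_one)

lemma prob_space_gw_space: "prob_space (gw_space p)"
  unfolding gw_space_def by (intro prob_space_PiM prob_space_measure_pmf)

lemma indep_vars_gw_space: "prob_space.indep_vars (gw_space p) (\<lambda>_. measure_pmf p) (\<lambda>u \<omega>. \<omega> u) UNIV"
proof -
  interpret prob_space "gw_space p" by (rule prob_space_gw_space)
  have "distr (gw_space p) (\<Pi>\<^sub>M u\<in>UNIV. measure_pmf p) (\<lambda>\<omega>. \<lambda>u\<in>UNIV. \<omega> u) = gw_space p"
    unfolding gw_space_def by (simp add: restrict_UNIV distr_id[unfolded id_def])
  also have "\<dots> = (\<Pi>\<^sub>M u\<in>UNIV. distr (gw_space p) (measure_pmf p) (\<lambda>\<omega>. \<omega> u))"
    unfolding gw_space_def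
    by (intro PiM_cong refl distr_PiM_component[symmetric] prob_space_measure_pmf) auto
  finally show ?thesis
    by (subst indep_vars_iff_distr_eq_PiM) (auto simp: gw_space_def)
qed

lemma measurable_gw_child [measurable]: "gw_child i \<in> gw_space p \<rightarrow>\<^sub>M gw_space p"
  unfolding gw_child_def gw_space_def by (rule measurable_PiM_single') (auto simp: space_PiM)

lemma measurable_gw_root: "(\<lambda>\<omega>. \<omega> []) \<in> gw_space p \<rightarrow>\<^sub>M count_space UNIV"
proof -
  have "(\<lambda>\<omega>. \<omega> []) \<in> gw_space p \<rightarrow>\<^sub>M measure_pmf p"
    unfolding gw_space_def by (rule measurable_component_singleton) simp
  then show ?thesis by (simp add: measurable_def)
qed

lemma distr_gw_child: "distr (gw_space p) (gw_space p) (gw_child i) = gw_space p"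
proof -
  have "distr (\<Pi>\<^sub>M u\<in>UNIV. measure_pmf p) (\<Pi>\<^sub>M u\<in>UNIV. measure_pmf p) (\<lambda>\<omega>. \<lambda>v\<in>UNIV. \<omega> (i # v))
        = (\<Pi>\<^sub>M u\<in>UNIV. measure_pmf p)"
    by (rule distr_PiM_reindex) (auto simp: prob_space_measure_pmf)
  then show ?thesis unfolding gw_space_def gw_child_def by (simp add: restrict_UNIV)
qed

lemma measurable_gw_pow [measurable]: "gw_pow x \<in> borel_measurable (gw_space p)"
  unfolding gw_pow_def[abs_def] by (rule borel_measurable_gw_size_fun)

lemma nn_integral_gw_child:
  assumes "f \<in> borel_measurable (gw_space p)"
  shows "(\<integral>\<^sup>+\<omega>. f (gw_child i \<omega>) \<partial>gw_space p) = (\<integral>\<^sup>+\<omega>. f \<omega> \<partial>gw_space p)"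
  using nn_integral_distr[of "gw_child i" "gw_space p" "gw_space p" f] assms
  by (simp add: distr_gw_child)

lemma nn_integral_gw_root_indicator:
  "(\<integral>\<^sup>+\<omega>. ennreal (indicator {k} (\<omega> [])) \<partial>gw_space p) = ennreal (pmf p k)"
proof -
  have "distr (gw_space p) (measure_pmf p) (\<lambda>\<omega>. \<omega> []) = measure_pmf p"
    unfolding gw_space_def by (intro distr_PiM_component prob_space_measure_pmf) auto
  moreover have "(\<integral>\<^sup>+j. ennreal (indicator {k} j) \<partial>distr (gw_space p) (measure_pmf p) (\<lambda>\<omega>. \<omega> [])) =
                 (\<integral>\<^sup>+\<omega>. ennreal (indicator {k} (\<omega> [])) \<partial>gw_space p)"
    by (rule nn_integral_distr) (simp_all add: measurable_gw_root)
  ultimately show ?thesis by (simp add: emeasure_pmf_single ennreal_indicator)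
qed

text \<open>The root degree and the subtrees of the children are functions of the marks on the
  disjoint vertex sets \<open>{[]}\<close> and \<open>range (Cons i)\<close>, hence independent.\<close>
lemma nn_integral_gw_root_children:
  assumes "0 \<le> x"
  shows "(\<integral>\<^sup>+\<omega>. ennreal (indicator {k} (\<omega> []) * (\<Prod>i<k. gw_pow x (gw_child i \<omega>))) \<partial>gw_space p)
       = ennreal (pmf p k) * (\<integral>\<^sup>+\<omega>. ennreal (gw_pow x \<omega>) \<partial>gw_space p) ^ k"
proof -
  interpret prob_space "gw_space p" by (rule prob_space_gw_space)
  define K :: "nat option \<Rightarrow> nat list set"
    where "K j = (case j of None \<Rightarrow> {[]} | Some i \<Rightarrow> range (Cons i))" for j
  define g :: "nat option \<Rightarrow> (nat list \<Rightarrow> nat) \<Rightarrow> real"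
    where "g = (\<lambda>j z. case j of None \<Rightarrow> indicator {k} (z []) | Some i \<Rightarrow> gw_pow x (\<lambda>v. z (i # v)))"
  define Y where "Y j \<omega> = ennreal (g j (restrict \<omega> (K j)))" for j \<omega>
  define L where "L = insert None (Some ` {..<k})"
  have "g j \<in> borel_measurable (\<Pi>\<^sub>M u\<in>K j. measure_pmf p)" for j
  proof (cases j)
    case (Some i)
    have "(\<lambda>z v. z (i # v)) \<in> (\<Pi>\<^sub>M u\<in>K j. measure_pmf p) \<rightarrow>\<^sub>M gw_space p"
      unfolding gw_space_def by (rule measurable_PiM_single') (auto simp: K_def Some space_PiM)
    then show ?thesis using Some by (simp add: g_def)
  qed (simp add: g_def K_def measurable_compose[OF measurable_component_singleton])
  then have "indep_vars (\<lambda>_. borel) Y UNIV"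
    unfolding Y_def
    by (intro indep_vars_compose2[OF indep_vars_restrict[OF indep_vars_gw_space]])
       (auto simp: K_def disjoint_family_on_def split: option.splits)
  then have indep: "indep_vars (\<lambda>_. borel) Y L"
    by (rule indep_vars_subset) simp
  have Y_root: "Y None = (\<lambda>\<omega>. ennreal (indicator {k} (\<omega> [])))"
    and Y_child: "Y (Some i) = (\<lambda>\<omega>. ennreal (gw_pow x (gw_child i \<omega>)))" for i
    by (simp_all add: fun_eq_iff Y_def g_def K_def gw_child_def)
  have child: "(\<integral>\<^sup>+\<omega>. ennreal (gw_pow x (gw_child i \<omega>)) \<partial>gw_space p) =
                (\<integral>\<^sup>+\<omega>. ennreal (gw_pow x \<omega>) \<partial>gw_space p)" for i
    by (rule nn_integral_gw_child) measurable
  have prod_L: "(\<Prod>j\<in>L. G j) = G None * (\<Prod>i<k. G (Some i))" for G :: "nat option \<Rightarrow> ennreal"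
    unfolding L_def by (subst prod.insert) (auto simp: prod.reindex)
  have "(\<integral>\<^sup>+\<omega>. ennreal (indicator {k} (\<omega> []) * (\<Prod>i<k. gw_pow x (gw_child i \<omega>))) \<partial>gw_space p)
      = (\<integral>\<^sup>+\<omega>. (\<Prod>j\<in>L. Y j \<omega>) \<partial>gw_space p)"
    using assms by (simp add: prod_L Y_root Y_child prod_ennreal gw_pow_nonneg ennreal_mult' prod_nonneg)
  also have "\<dots> = (\<Prod>j\<in>L. \<integral>\<^sup>+\<omega>. Y j \<omega> \<partial>gw_space p)"
    by (rule indep_vars_nn_integral[OF _ indep]) (simp_all add: L_def)
  also have "\<dots> = ennreal (pmf p k) * (\<integral>\<^sup>+\<omega>. ennreal (gw_pow x \<omega>) \<partial>gw_space p) ^ k"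
    by (simp add: prod_L Y_root Y_child nn_integral_gw_root_indicator child)
  finally show ?thesis .
qed

lemma nn_integral_gw_pow_fixpoint:
  assumes "0 \<le> x"
  shows "(\<integral>\<^sup>+\<omega>. ennreal (gw_pow x \<omega>) \<partial>gw_space p)
       = ennreal x * (\<integral>\<^sup>+k. (\<integral>\<^sup>+\<omega>. ennreal (gw_pow x \<omega>) \<partial>gw_space p) ^ k \<partial>measure_pmf p)"
proof -
  define T where "T k \<omega> = ennreal (indicator {k} (\<omega> []) * (\<Prod>i<k. gw_pow x (gw_child i \<omega>)))"
    for k \<omega>
  have T_measurable: "T k \<in> borel_measurable (gw_space p)" for k
  proof -
    have "(\<lambda>\<omega>. indicator {k} (\<omega> []) :: real) \<in> borel_measurable (gw_space p)"
      by (rule measurable_compose[OF measurable_gw_root]) simp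
    then show ?thesis unfolding T_def by measurable
  qed
  have "ennreal (gw_pow x \<omega>) = ennreal x * (\<Sum>k. T k \<omega>)" for \<omega>
  proof -
    have "(\<lambda>k. T k \<omega>) = (\<lambda>k. if k = \<omega> [] then ennreal (\<Prod>i<k. gw_pow x (gw_child i \<omega>)) else 0)"
      by (auto simp: T_def fun_eq_iff)
    then have "(\<Sum>k. T k \<omega>) = ennreal (\<Prod>i<\<omega> []. gw_pow x (gw_child i \<omega>))"
      using sums_single[of "\<omega> []" "\<lambda>k. ennreal (\<Prod>i<k. gw_pow x (gw_child i \<omega>))"]
      by (simp add: sums_iff)
    then show ?thesis
      by (subst gw_pow_child_decomp) (simp add: ennreal_mult' assms)
  qed
  then have "(\<integral>\<^sup>+\<omega>. ennreal (gw_pow x \<omega>) \<partial>gw_space p) = ennreal x * (\<Sum>k. \<integral>\<^sup>+\<omega>. T k \<omega> \<partial>gw_space p)"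
    using T_measurable
    by (simp add: nn_integral_cmult borel_measurable_suminf_order nn_integral_suminf)
  also have "\<dots> = ennreal x * (\<Sum>k. ennreal (pmf p k) * (\<integral>\<^sup>+\<omega>. ennreal (gw_pow x \<omega>) \<partial>gw_space p) ^ k)"
    unfolding T_def by (simp add: nn_integral_gw_root_children[OF assms])
  also have "\<dots> = ennreal x * (\<integral>\<^sup>+k. (\<integral>\<^sup>+\<omega>. ennreal (gw_pow x \<omega>) \<partial>gw_space p) ^ k \<partial>measure_pmf p)"
    by (simp only: nn_integral_measure_pmf nn_integral_count_space_nat)
  finally show ?thesis .
qed

section \<open>Generating functions\<close>

lemma integrable_pgf_power:
  fixes y :: real
  assumes "\<bar>y\<bar> \<le> 1"
  shows "integrable (measure_pmf p) (\<lambda>k. y ^ k)"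
  by (rule measure_pmf.integrable_const_bound[where B = 1])
     (use assms in \<open>simp_all add: power_le_one power_abs\<close>)

lemma nn_integral_pgf:
  "0 \<le> y \<Longrightarrow> y \<le> 1 \<Longrightarrow> (\<integral>\<^sup>+k. ennreal (y ^ k) \<partial>measure_pmf p) = ennreal (pgf p y)"
  unfolding pgf_def by (intro nn_integral_eq_integral integrable_pgf_power) auto

lemma pgf_one: "pgf p 1 = 1"
  by (simp add: pgf_def)

lemma convex_on_pgf: "convex_on {0..1} (pgf p)"
proof (rule convex_onI)
  fix l a b :: real
  assume l: "0 < l" "l < 1" and ab: "a \<in> {0..1}" "b \<in> {0..1}"
  have "convex_on {0..} (\<lambda>x::real. x ^ k)" for k
    by (cases "even k") (auto intro: convex_power_even convex_power_odd convex_on_subset)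
  then have "((1 - l) * a + l * b) ^ k \<le> (1 - l) * a ^ k + l * b ^ k" for k
    using convex_onD[of "{0..}" "\<lambda>x. x ^ k" l a b] l ab by simp
  moreover have "\<bar>(1 - l) * a + l * b\<bar> \<le> 1"
    using l ab convex_bound_le[of a 1 b "1 - l" l] by simp
  ultimately have "pgf p ((1 - l) * a + l * b) \<le> measure_pmf.expectation p (\<lambda>k. (1 - l) * a ^ k + l * b ^ k)"
    unfolding pgf_def using ab
    by (intro integral_mono Bochner_Integration.integrable_add integrable_mult_right integrable_pgf_power) auto
  also have "\<dots> = (1 - l) * pgf p a + l * pgf p b"
    unfolding pgf_def using ab by (simp add: integrable_pgf_power)
  finally show "pgf p ((1 - l) *\<^sub>R a + l *\<^sub>R b) \<le> (1 - l) * pgf p a + l * pgf p b" by simp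
qed (rule convex_real_interval)

lemma pgf_ge_self:
  assumes "integrable (measure_pmf p) real" "measure_pmf.expectation p real \<le> 1"
    and "0 \<le> y" "y \<le> 1"
  shows "y \<le> pgf p y"
proof -
  have "y \<le> 1 + measure_pmf.expectation p real * (y - 1)"
    using assms(2-4) mult_left_mono_neg[of "measure_pmf.expectation p real" 1 "y - 1"]
    by (simp add: mult.commute)
  also have "\<dots> = measure_pmf.expectation p (\<lambda>k. 1 + real k * (y - 1))"
    using assms(1) by simp
  also have "\<dots> \<le> pgf p y"
    unfolding pgf_def using assms(1,3,4) Bernoulli_inequality[of "y - 1"]
    by (intro integral_mono integrable_pgf_power) auto
  finally show ?thesis .
qed

lemma borel_measurable_pgf [measurable]: "pgf p \<in> borel_measurable borel"
proof -
  have "(\<lambda>z :: real \<times> nat. (\<lambda>n z. fst z ^ n) (snd z) z) \<in> borel_measurable (borel \<Otimes>\<^sub>M measure_pmf p)"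
  proof (rule measurable_compose_countable)
    show "(\<lambda>z :: real \<times> nat. fst z ^ n) \<in> borel_measurable (borel \<Otimes>\<^sub>M measure_pmf p)" for n :: nat
      by measurable
    show "snd \<in> borel \<Otimes>\<^sub>M measure_pmf p \<rightarrow>\<^sub>M count_space UNIV"
      using measurable_compose[OF measurable_snd, of "\<lambda>k. k" "measure_pmf p"]
      by (simp add: measurable_def)
  qed
  then show ?thesis
    unfolding pgf_def[abs_def]
    by (intro measure_pmf.borel_measurable_lebesgue_integral) (simp add: case_prod_beta')
qed

definition gw_gf :: "nat pmf \<Rightarrow> real \<Rightarrow> real" where
  "gw_gf p x = (\<integral>\<omega>. gw_pow x \<omega> \<partial>gw_space p)"

lemma
  assumes "0 \<le> x" "x \<le> 1"
  shows nn_integral_gw_pow: "(\<integral>\<^sup>+\<omega>. ennreal (gw_pow x \<omega>) \<partial>gw_space p) = ennreal (gw_gf p x)"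
    and gw_gf_nonneg: "0 \<le> gw_gf p x"
    and gw_gf_le_1: "gw_gf p x \<le> 1"
proof -
  interpret prob_space "gw_space p" by (rule prob_space_gw_space)
  have integrable: "integrable (gw_space p) (gw_pow x)"
    by (rule integrable_const_bound[where B = 1]) (simp_all add: assms gw_pow_nonneg gw_pow_le_1)
  show "(\<integral>\<^sup>+\<omega>. ennreal (gw_pow x \<omega>) \<partial>gw_space p) = ennreal (gw_gf p x)"
    unfolding gw_gf_def using integrable by (rule nn_integral_eq_integral) (simp add: assms gw_pow_nonneg)
  show "0 \<le> gw_gf p x"
    unfolding gw_gf_def by (simp add: assms gw_pow_nonneg)
  show "gw_gf p x \<le> 1"
    unfolding gw_gf_def using integrable assms gw_pow_le_1
    by (intro integral_le_const) simp_all
qed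

lemma gw_gf_fixpoint:
  assumes "0 \<le> x" "x \<le> 1"
  shows "gw_gf p x = x * pgf p (gw_gf p x)"
proof -
  have "ennreal (gw_gf p x) = ennreal x * (\<integral>\<^sup>+k. ennreal (gw_gf p x) ^ k \<partial>measure_pmf p)"
    using nn_integral_gw_pow_fixpoint[OF assms(1), of p] by (simp add: nn_integral_gw_pow[OF assms])
  also have "\<dots> = ennreal (x * pgf p (gw_gf p x))"
    using assms gw_gf_nonneg[OF assms] gw_gf_le_1[OF assms]
    by (simp add: ennreal_power nn_integral_pgf ennreal_mult')
  finally show ?thesis
    using assms gw_gf_nonneg[OF assms] gw_gf_le_1[OF assms]
    by (subst (asm) ennreal_inj) (auto simp: pgf_def intro!: mult_nonneg_nonneg integral_nonneg)
qed

lemma convex_on_pos_iff_less_root: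
  fixes g :: "real \<Rightarrow> real"
  assumes g: "convex_on {0..1} g" and r: "0 \<le> r" "r < 1" "g r = 0" and "g 1 < 0"
    and \<eta>: "0 \<le> \<eta>" "\<eta> \<le> 1"
  shows "0 < g \<eta> \<longleftrightarrow> \<eta> < r"
proof (cases \<eta> r rule: linorder_cases)
  case less
  define l where "l = (r - \<eta>) / (1 - \<eta>)"
  have l: "0 < l" "l < 1"
    using less r by (auto simp: l_def field_simps)
  have "l * (1 - \<eta>) = r - \<eta>"
    using less r by (simp add: l_def)
  then have "(1 - l) * \<eta> + l * 1 = r"
    by (simp add: algebra_simps)
  then have "g r \<le> (1 - l) * g \<eta> + l * g 1"
    using convex_onD[OF g, of l \<eta> 1] l \<eta> by simp
  moreover have "l * g 1 < 0"
    using l \<open>g 1 < 0\<close> by (simp add: mult_pos_neg)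
  ultimately have "0 < (1 - l) * g \<eta>"
    using r by linarith
  then show ?thesis
    using l less by (simp add: zero_less_mult_iff)
next
  case greater
  define l where "l = (\<eta> - r) / (1 - r)"
  have l: "0 < l" "l \<le> 1"
    using greater r \<eta> by (auto simp: l_def field_simps)
  have "l * (1 - r) = \<eta> - r"
    using r by (simp add: l_def)
  then have "(1 - l) * r + l * 1 = \<eta>"
    by (simp add: algebra_simps)
  then have "g \<eta> \<le> (1 - l) * g r + l * g 1"
    using convex_onD[OF g, of l r 1] l r by simp
  moreover have "l * g 1 < 0"
    using l \<open>g 1 < 0\<close> by (simp add: mult_pos_neg)
  ultimately show ?thesis
    using r greater by simp
qed (simp add: r)

text \<open>For \<open>x < 1\<close> the convex function \<open>\<eta> \<mapsto> x \<Phi>(\<eta>) - \<eta>\<close> vanishes at \<open>gw_gf p x\<close>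
  (fixpoint equation) and is negative at 1, so it is positive exactly below \<open>gw_gf p x\<close>.\<close>
lemma less_pgf_iff_less_gw_gf:
  assumes p: "integrable (measure_pmf p) real" "measure_pmf.expectation p real \<le> 1"
    and x: "0 < x" "x < 1" and \<eta>: "0 \<le> \<eta>" "\<eta> \<le> 1"
  shows "\<eta> < x * pgf p \<eta> \<longleftrightarrow> \<eta> < gw_gf p x"
proof -
  define F where "F = gw_gf p x"
  have F: "0 \<le> F" "F \<le> 1" "F = x * pgf p F"
    unfolding F_def using x by (auto intro: gw_gf_nonneg gw_gf_le_1 gw_gf_fixpoint)
  then have "F \<noteq> 1" using x by (auto simp: pgf_one)
  have "convex_on {0..1} (\<lambda>\<eta>. x * pgf p \<eta> - \<eta>)"
    using x by (intro convex_on_diff convex_on_cmul convex_on_pgf) (simp_all add: concave_on_ident)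
  then have "0 < x * pgf p \<eta> - \<eta> \<longleftrightarrow> \<eta> < F"
    using F \<open>F \<noteq> 1\<close> x \<eta> by (intro convex_on_pos_iff_less_root) (auto simp: pgf_one)
  then show ?thesis by (simp add: F_def)
qed

section \<open>Gamma integrals\<close>

definition gamma_kernel :: "real \<Rightarrow> real \<Rightarrow> real" where
  "gamma_kernel a v = v powr (a - 1) * exp (- v)"

lemma gamma_kernel_nonneg: "0 \<le> gamma_kernel a v"
  by (simp add: gamma_kernel_def)

lemma borel_measurable_gamma_kernel [measurable]: "gamma_kernel a \<in> borel_measurable borel"
  unfolding gamma_kernel_def by measurable

lemma nn_integral_gamma_kernel:
  assumes "0 < a"
  shows "(\<integral>\<^sup>+v. ennreal (indicator {0<..} v * gamma_kernel a v) \<partial>lborel) = ennreal (Gamma a)"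
proof -
  have "indicator {0..} v * (v powr (a - 1) / exp v) = indicator {0<..} v * gamma_kernel a v" for v :: real
    by (cases "v = 0") (auto simp: gamma_kernel_def indicator_def exp_minus field_simps)
  then show ?thesis
    using nn_integral_has_integral_lebesgue[OF _ Gamma_integral_real[OF assms]] by simp
qed

lemma nn_integral_lborel_scale_powr:
  fixes \<phi> \<psi> :: "real \<Rightarrow> real"
  assumes y: "0 < y" and [measurable]: "\<phi> \<in> borel_measurable borel" "\<psi> \<in> borel_measurable borel"
    and scale: "\<And>s. \<phi> (y * s) = y powr (a - 1) * \<psi> s"
  shows "(\<integral>\<^sup>+s. ennreal (\<psi> s) \<partial>lborel) = ennreal (y powr (- a)) * (\<integral>\<^sup>+v. ennreal (\<phi> v) \<partial>lborel)"
proof -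
  have "(\<integral>\<^sup>+v. ennreal (\<phi> v) \<partial>lborel) = ennreal y * (\<integral>\<^sup>+s. ennreal (\<phi> (0 + y * s)) \<partial>lborel)"
    using y by (subst nn_integral_real_affine[where c = y and t = 0]) auto
  also have "\<dots> = ennreal y * (ennreal (y powr (a - 1)) * (\<integral>\<^sup>+s. ennreal (\<psi> s) \<partial>lborel))"
    by (simp add: scale ennreal_mult' nn_integral_cmult)
  also have "\<dots> = ennreal (y powr a) * (\<integral>\<^sup>+s. ennreal (\<psi> s) \<partial>lborel)"
    using y by (simp add: mult.assoc[symmetric] ennreal_mult'[symmetric] powr_diff)
  finally have "ennreal (y powr (- a)) * (\<integral>\<^sup>+v. ennreal (\<phi> v) \<partial>lborel)
      = ennreal (y powr (- a) * y powr a) * (\<integral>\<^sup>+s. ennreal (\<psi> s) \<partial>lborel)"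
    by (simp add: mult.assoc ennreal_mult')
  then show ?thesis
    using y by (simp add: powr_add[symmetric])
qed

lemma nn_integral_gamma_rate:
  assumes a: "0 < a" and y: "0 < y"
  shows "(\<integral>\<^sup>+s. ennreal (indicator {0<..} s * (s powr (a - 1) * exp (- (y * s)))) \<partial>lborel)
       = ennreal (Gamma a * y powr (- a))"
proof -
  have "(\<integral>\<^sup>+s. ennreal (indicator {0<..} s * (s powr (a - 1) * exp (- (y * s)))) \<partial>lborel)
      = ennreal (y powr (- a)) * (\<integral>\<^sup>+v. ennreal (indicator {0<..} v * gamma_kernel a v) \<partial>lborel)"
    using y by (intro nn_integral_lborel_scale_powr)
      (auto simp: gamma_kernel_def indicator_def powr_mult zero_less_mult_iff)
  also have "\<dots> = ennreal (y powr (- a)) * ennreal (Gamma a)"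
    by (simp only: nn_integral_gamma_kernel[OF a])
  finally show ?thesis
    using Gamma_real_pos[OF a] by (simp add: ennreal_mult'[symmetric] mult.commute)
qed

definition lower_gamma :: "real \<Rightarrow> real \<Rightarrow> real" where
  "lower_gamma a z = enn2real (\<integral>\<^sup>+v. ennreal (indicator {0<..z} v * gamma_kernel a v) \<partial>lborel)"

lemma lower_gamma_nonneg: "0 \<le> lower_gamma a z"
  unfolding lower_gamma_def by (rule enn2real_nonneg)

lemma nn_integral_lower_gamma:
  assumes "0 < a"
  shows "(\<integral>\<^sup>+v. ennreal (indicator {0<..z} v * gamma_kernel a v) \<partial>lborel) = ennreal (lower_gamma a z)"
proof -
  have "(\<integral>\<^sup>+v. ennreal (indicator {0<..z} v * gamma_kernel a v) \<partial>lborel)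
        \<le> (\<integral>\<^sup>+v. ennreal (indicator {0<..} v * gamma_kernel a v) \<partial>lborel)"
    by (intro nn_integral_mono ennreal_leI mult_right_mono) (auto simp: indicator_def gamma_kernel_nonneg)
  then have "(\<integral>\<^sup>+v. ennreal (indicator {0<..z} v * gamma_kernel a v) \<partial>lborel) < top"
    using assms by (simp add: nn_integral_gamma_kernel le_less_trans)
  then show ?thesis unfolding lower_gamma_def by simp
qed

lemma mono_lower_gamma:
  assumes "0 < a"
  shows "mono (lower_gamma a)"
proof
  fix z z' :: real assume "z \<le> z'"
  then have "(\<integral>\<^sup>+v. ennreal (indicator {0<..z} v * gamma_kernel a v) \<partial>lborel)
             \<le> (\<integral>\<^sup>+v. ennreal (indicator {0<..z'} v * gamma_kernel a v) \<partial>lborel)"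
    by (intro nn_integral_mono ennreal_leI mult_right_mono) (auto simp: indicator_def gamma_kernel_nonneg)
  then show "lower_gamma a z \<le> lower_gamma a z'"
    using assms by (simp add: nn_integral_lower_gamma lower_gamma_nonneg)
qed

lemma borel_measurable_lower_gamma: "0 < a \<Longrightarrow> lower_gamma a \<in> borel_measurable borel"
  by (rule borel_measurable_mono[OF mono_lower_gamma])

lemma upper_gamma_eq_Gamma_minus_lower_gamma:
  assumes a: "0 < a" and z: "0 \<le> z"
  shows "(LBINT v=ereal z..\<infinity>. v powr (a - 1) * exp (- v)) = Gamma a - lower_gamma a z"
proof -
  define X where "X = (\<integral>\<^sup>+v. ennreal (indicator {z<..} v * gamma_kernel a v) \<partial>lborel)"
  have "(LBINT v=ereal z..\<infinity>. v powr (a - 1) * exp (- v)) = (\<integral>v. indicator {z<..} v * gamma_kernel a v \<partial>lborel)"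
    unfolding gamma_kernel_def by (subst interval_integral_Ioi) (auto simp: set_lebesgue_integral_def)
  also have "\<dots> = enn2real X"
    unfolding X_def by (rule integral_eq_nn_integral) (auto simp: gamma_kernel_nonneg)
  finally have upper: "(LBINT v=ereal z..\<infinity>. v powr (a - 1) * exp (- v)) = enn2real X" .
  have "ennreal (indicator {0<..} v * gamma_kernel a v)
        = ennreal (indicator {0<..z} v * gamma_kernel a v) + ennreal (indicator {z<..} v * gamma_kernel a v)" for v
    using z by (auto simp: indicator_def gamma_kernel_nonneg)
  then have sum: "ennreal (Gamma a) = ennreal (lower_gamma a z) + X"
    unfolding X_def nn_integral_gamma_kernel[OF a, symmetric] nn_integral_lower_gamma[OF a, symmetric]
    by (simp add: nn_integral_add)
  then have "X < top"
    by (metis ennreal_add_eq_top ennreal_neq_top top.not_eq_extremum)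
  then have "Gamma a = lower_gamma a z + enn2real X"
    using arg_cong[OF sum, of enn2real] Gamma_real_pos[OF a] lower_gamma_nonneg[of a z]
    by (simp add: enn2real_plus)
  then show ?thesis
    using upper by simp
qed

lemma nn_integral_truncated_gamma_rate:
  assumes a: "0 < a" and b: "0 < b"
  shows "(\<integral>\<^sup>+s. ennreal (indicator {0<..<L} s * (s powr (a - 1) * exp (- (b * s)))) \<partial>lborel)
       = ennreal (b powr (- a) * lower_gamma a (b * L))"
proof -
  have "(\<integral>\<^sup>+s. ennreal (indicator {0<..<L} s * (s powr (a - 1) * exp (- (b * s)))) \<partial>lborel)
      = ennreal (b powr (- a)) * (\<integral>\<^sup>+v. ennreal (indicator {0<..<b * L} v * gamma_kernel a v) \<partial>lborel)"
    using b by (intro nn_integral_lborel_scale_powr)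
      (auto simp: indicator_def gamma_kernel_def powr_mult zero_less_mult_iff)
  also have "(\<integral>\<^sup>+v. ennreal (indicator {0<..<b * L} v * gamma_kernel a v) \<partial>lborel)
           = (\<integral>\<^sup>+v. ennreal (indicator {0<..b * L} v * gamma_kernel a v) \<partial>lborel)"
    using AE_lborel_singleton[of "b * L"] by (intro nn_integral_cong_AE) (auto simp: indicator_def)
  finally show ?thesis
    using a b by (simp add: nn_integral_lower_gamma ennreal_mult'' lower_gamma_nonneg)
qed

section \<open>The moment identity\<close>

lemma borel_measurable_ln_gw_R [measurable]: "(\<lambda>\<eta>. ln (gw_R p \<eta>)) \<in> borel_measurable borel"
  unfolding gw_R_def by measurable

lemma ln_gw_R_nonneg:
  assumes "integrable (measure_pmf p) real" "measure_pmf.expectation p real \<le> 1"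
    and "0 < \<eta>" "\<eta> \<le> 1"
  shows "0 \<le> ln (gw_R p \<eta>)"
  using pgf_ge_self[OF assms(1,2), of \<eta>] assms(3,4) by (simp add: gw_R_def)

lemma less_ln_gw_R_iff:
  assumes "integrable (measure_pmf p) real" "measure_pmf.expectation p real \<le> 1"
    and \<eta>: "0 < \<eta>" "\<eta> \<le> 1"
  shows "s < ln (gw_R p \<eta>) \<longleftrightarrow> \<eta> < exp (- s) * pgf p \<eta>"
proof -
  have R: "0 < gw_R p \<eta>"
    using pgf_ge_self[OF assms(1,2), of \<eta>] \<eta> by (simp add: gw_R_def)
  have "s < ln (gw_R p \<eta>) \<longleftrightarrow> exp s < gw_R p \<eta>"
    using R by (metis exp_less_cancel_iff exp_ln)
  also have "\<dots> \<longleftrightarrow> \<eta> < exp (- s) * pgf p \<eta>"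
    using \<eta> by (simp add: gw_R_def pos_less_divide_eq exp_minus field_simps)
  finally show ?thesis .
qed

lemma gw_gf_eq_emeasure_level_set:
  assumes "integrable (measure_pmf p) real" "measure_pmf.expectation p real \<le> 1" and "0 < s"
  shows "ennreal (gw_gf p (exp (- s))) = emeasure lborel {\<eta>\<in>{0<..1}. s < ln (gw_R p \<eta>)}"
proof -
  have "{\<eta>\<in>{0<..1}. s < ln (gw_R p \<eta>)} = {0<..<gw_gf p (exp (- s))}"
    using assms less_ln_gw_R_iff[OF assms(1,2)] less_pgf_iff_less_gw_gf[OF assms(1,2)]
      gw_gf_le_1[of "exp (- s)" p]
    by (auto simp: less_le_trans[of _ _ 1])
  then show ?thesis
    using gw_gf_nonneg[of "exp (- s)" p] assms(3) by simp
qed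

lemma measurable_gw_pow_exp:
  "(\<lambda>z. gw_pow (exp (- snd z)) (fst z)) \<in> borel_measurable (gw_space p \<Otimes>\<^sub>M lborel)"
  using borel_measurable_if_finite_gw_tree[of fst "gw_space p \<Otimes>\<^sub>M lborel" p "\<lambda>n z. exp (- snd z) ^ n"]
  by (simp add: gw_pow_def)

text \<open>The Gamma integral \<open>\<Gamma>(a) (n + b) powr (-a) = \<integral>\<^sub>0\<^sup>\<infinity> s powr (a - 1) e\<^sup>-\<^sup>b\<^sup>s (e\<^sup>-\<^sup>s)\<^sup>n ds\<close>
  turns negative moments of the tree size into integrals of its generating function.\<close>
lemma Gamma_gw_size_powr:
  assumes a: "0 < a" and b: "0 < b"
  shows "ennreal (Gamma a * (if finite (gw_tree \<omega>) then (real (card (gw_tree \<omega>)) + b) powr (- a) else 0))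
       = (\<integral>\<^sup>+s. ennreal (indicator {0<..} s * (s powr (a - 1) * exp (- (b * s))) * gw_pow (exp (- s)) \<omega>) \<partial>lborel)"
proof (cases "finite (gw_tree \<omega>)")
  case True
  define n where "n = card (gw_tree \<omega>)"
  have "exp (- (b * s)) * exp (- s) ^ n = exp (- ((b + real n) * s))" for s
    by (simp add: exp_of_nat_mult[symmetric] exp_add[symmetric] algebra_simps)
  then have "(\<integral>\<^sup>+s. ennreal (indicator {0<..} s * (s powr (a - 1) * exp (- (b * s))) * gw_pow (exp (- s)) \<omega>) \<partial>lborel)
      = (\<integral>\<^sup>+s. ennreal (indicator {0<..} s * (s powr (a - 1) * exp (- ((b + real n) * s)))) \<partial>lborel)"
    using True by (simp add: gw_pow_def n_def mult.assoc)
  also have "\<dots> = ennreal (Gamma a * (b + real n) powr (- a))"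
    using b by (intro nn_integral_gamma_rate[OF a]) simp
  finally show ?thesis
    using True by (simp add: n_def add.commute)
qed (simp add: gw_pow_def)

lemma nn_integral_Gamma_gw_size_powr:
  assumes p: "integrable (measure_pmf p) real" "measure_pmf.expectation p real \<le> 1"
    and a: "0 < a" and b: "0 < b"
  shows "(\<integral>\<^sup>+\<omega>. ennreal (Gamma a * (if finite (gw_tree \<omega>) then (real (card (gw_tree \<omega>)) + b) powr (- a) else 0)) \<partial>gw_space p)
       = (\<integral>\<^sup>+s. ennreal (indicator {0<..} s * (s powr (a - 1) * exp (- (b * s))))
                  * emeasure lborel {\<eta>\<in>{0<..1}. s < ln (gw_R p \<eta>)} \<partial>lborel)"
proof -
  define W where "W s = indicator {0<..} s * (s powr (a - 1) * exp (- (b * s)))" for s :: real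
  have W_nonneg: "0 \<le> W s" for s
    by (simp add: W_def)
  interpret pair_sigma_finite "gw_space p" "lborel :: real measure"
    by (intro pair_sigma_finite.intro prob_space_imp_sigma_finite prob_space_gw_space sigma_finite_lborel)
  have "(\<lambda>(\<omega>, s). ennreal (W s * gw_pow (exp (- s)) \<omega>)) \<in> borel_measurable (gw_space p \<Otimes>\<^sub>M lborel)"
    using measurable_gw_pow_exp[of p] unfolding W_def case_prod_beta by measurable
  then have "(\<integral>\<^sup>+\<omega>. (\<integral>\<^sup>+s. ennreal (W s * gw_pow (exp (- s)) \<omega>) \<partial>lborel) \<partial>gw_space p)
           = (\<integral>\<^sup>+s. (\<integral>\<^sup>+\<omega>. ennreal (W s * gw_pow (exp (- s)) \<omega>) \<partial>gw_space p) \<partial>lborel)"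
    by (rule Fubini'[symmetric])
  also have "\<dots> = (\<integral>\<^sup>+s. ennreal (W s) * emeasure lborel {\<eta>\<in>{0<..1}. s < ln (gw_R p \<eta>)} \<partial>lborel)"
  proof (rule nn_integral_cong)
    fix s :: real
    show "(\<integral>\<^sup>+\<omega>. ennreal (W s * gw_pow (exp (- s)) \<omega>) \<partial>gw_space p)
          = ennreal (W s) * emeasure lborel {\<eta>\<in>{0<..1}. s < ln (gw_R p \<eta>)}"
    proof (cases "0 < s")
      case True
      then show ?thesis
        by (simp add: W_nonneg ennreal_mult' nn_integral_cmult nn_integral_gw_pow
                      gw_gf_eq_emeasure_level_set[OF p])
    qed (simp add: W_def)
  qed
  finally show ?thesis
    using Gamma_gw_size_powr[OF a b] by (simp add: W_def)
qed

lemma nn_integral_gamma_rate_level_sets: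
  fixes L :: "real \<Rightarrow> real"
  assumes a: "0 < a" and b: "0 < b" and [measurable]: "L \<in> borel_measurable borel"
  shows "(\<integral>\<^sup>+s. ennreal (indicator {0<..} s * (s powr (a - 1) * exp (- (b * s))))
                 * emeasure lborel {\<eta>\<in>{0<..1}. s < L \<eta>} \<partial>lborel)
       = (\<integral>\<^sup>+\<eta>. ennreal (indicator {0<..1} \<eta> * (b powr (- a) * lower_gamma a (b * L \<eta>))) \<partial>lborel)"
proof -
  define W where "W s = indicator {0<..} s * (s powr (a - 1) * exp (- (b * s)))" for s :: real
  define f where "f s \<eta> = ennreal (W s * indicator {0<..1} \<eta> * indicator {z. fst z < L (snd z)} (s, \<eta>))"
    for s \<eta> :: real
  have W_nonneg: "0 \<le> W s" for s
    by (simp add: W_def)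
  have "(\<integral>\<^sup>+s. ennreal (W s) * emeasure lborel {\<eta>\<in>{0<..1}. s < L \<eta>} \<partial>lborel)
      = (\<integral>\<^sup>+s. (\<integral>\<^sup>+\<eta>. f s \<eta> \<partial>lborel) \<partial>lborel)"
  proof (intro nn_integral_cong)
    fix s :: real
    have "f s = (\<lambda>\<eta>. ennreal (W s) * indicator {\<eta>\<in>{0<..1}. s < L \<eta>} \<eta>)"
      by (auto simp: fun_eq_iff f_def indicator_def W_nonneg)
    then show "ennreal (W s) * emeasure lborel {\<eta>\<in>{0<..1}. s < L \<eta>} = (\<integral>\<^sup>+\<eta>. f s \<eta> \<partial>lborel)"
      by (simp add: nn_integral_cmult)
  qed
  also have "\<dots> = (\<integral>\<^sup>+\<eta>. (\<integral>\<^sup>+s. f s \<eta> \<partial>lborel) \<partial>lborel)"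
    by (rule lborel_pair.Fubini') (unfold f_def W_def case_prod_beta, measurable)
  also have "\<dots> = (\<integral>\<^sup>+\<eta>. ennreal (indicator {0<..1} \<eta> * (b powr (- a) * lower_gamma a (b * L \<eta>))) \<partial>lborel)"
  proof (rule nn_integral_cong)
    fix \<eta> :: real
    have "f s \<eta> = ennreal (indicator {0<..1} \<eta>)
                    * ennreal (indicator {0<..<L \<eta>} s * (s powr (a - 1) * exp (- (b * s))))" for s
      by (auto simp: f_def W_def indicator_def)
    then have "(\<integral>\<^sup>+s. f s \<eta> \<partial>lborel)
               = ennreal (indicator {0<..1} \<eta>) * ennreal (b powr (- a) * lower_gamma a (b * L \<eta>))"
      by (simp add: nn_integral_cmult nn_integral_truncated_gamma_rate[OF a b])
    then show "(\<integral>\<^sup>+s. f s \<eta> \<partial>lborel) = ennreal (indicator {0<..1} \<eta> * (b powr (- a) * lower_gamma a (b * L \<eta>)))"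
      by (simp add: ennreal_mult')
  qed
  finally show ?thesis
    by (simp add: W_def)
qed

lemma nn_integral_gw_size_powr:
  assumes p: "integrable (measure_pmf p) real" "measure_pmf.expectation p real \<le> 1"
    and a: "0 < a" and b: "0 < b"
  shows "(\<integral>\<^sup>+\<omega>. ennreal (if finite (gw_tree \<omega>) then (real (card (gw_tree \<omega>)) + b) powr (- a) else 0) \<partial>gw_space p)
       = (\<integral>\<^sup>+\<eta>. ennreal (indicator {0<..1} \<eta> * (b powr (- a) * lower_gamma a (b * ln (gw_R p \<eta>)) / Gamma a)) \<partial>lborel)"
proof -
  define I where "I \<omega> = (if finite (gw_tree \<omega>) then (real (card (gw_tree \<omega>)) + b) powr (- a) else 0)" for \<omega>
  define J where "J \<eta> = indicator {0<..1} \<eta> * (b powr (- a) * lower_gamma a (b * ln (gw_R p \<eta>)))" for \<eta>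
  have \<Gamma>: "0 < Gamma a"
    using a by (rule Gamma_real_pos)
  have "I \<in> borel_measurable (gw_space p)"
    unfolding I_def[abs_def] by (rule borel_measurable_gw_size_fun)
  then have "ennreal (Gamma a) * (\<integral>\<^sup>+\<omega>. ennreal (I \<omega>) \<partial>gw_space p) = (\<integral>\<^sup>+\<omega>. ennreal (Gamma a * I \<omega>) \<partial>gw_space p)"
    using \<Gamma> by (simp add: ennreal_mult' nn_integral_cmult)
  also have "\<dots> = (\<integral>\<^sup>+\<eta>. ennreal (J \<eta>) \<partial>lborel)"
    unfolding I_def J_def
    using nn_integral_Gamma_gw_size_powr[OF p a b] nn_integral_gamma_rate_level_sets[OF a b] by simp
  also have "\<dots> = ennreal (Gamma a) * (\<integral>\<^sup>+\<eta>. ennreal (J \<eta> / Gamma a) \<partial>lborel)"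
  proof -
    have [measurable]: "lower_gamma a \<in> borel_measurable borel"
      using a by (rule borel_measurable_lower_gamma)
    have "(\<lambda>\<eta>. ennreal (J \<eta> / Gamma a)) \<in> borel_measurable borel"
      unfolding J_def by measurable
    moreover have "ennreal (J \<eta>) = ennreal (Gamma a) * ennreal (J \<eta> / Gamma a)" for \<eta>
      using \<Gamma> by (simp flip: ennreal_mult')
    ultimately show ?thesis
      by (simp add: nn_integral_cmult)
  qed
  finally show ?thesis
    using \<Gamma> by (simp add: I_def J_def ennreal_mult_cancel_left)
qed

lemma integral_gw_size_powr:
  assumes p: "integrable (measure_pmf p) real" "measure_pmf.expectation p real \<le> 1"
    and a: "0 < a" and b: "0 < b"
  shows "(\<integral>\<omega>. (if finite (gw_tree \<omega>) then (real (card (gw_tree \<omega>)) + b) powr (- a) else 0) \<partial>gw_space p)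
       = (\<integral>\<eta>. indicator {0<..1} \<eta> * (b powr (- a) * lower_gamma a (b * ln (gw_R p \<eta>)) / Gamma a) \<partial>lborel)"
proof -
  have [measurable]: "lower_gamma a \<in> borel_measurable borel"
    using a by (rule borel_measurable_lower_gamma)
  have "(\<integral>\<omega>. (if finite (gw_tree \<omega>) then (real (card (gw_tree \<omega>)) + b) powr (- a) else 0) \<partial>gw_space p)
      = enn2real (\<integral>\<^sup>+\<omega>. ennreal (if finite (gw_tree \<omega>) then (real (card (gw_tree \<omega>)) + b) powr (- a) else 0) \<partial>gw_space p)"
    by (intro integral_eq_nn_integral borel_measurable_gw_size_fun) simp
  also have "\<dots> = enn2real (\<integral>\<^sup>+\<eta>. ennreal (indicator {0<..1} \<eta> * (b powr (- a) * lower_gamma a (b * ln (gw_R p \<eta>)) / Gamma a)) \<partial>lborel)"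
    by (simp only: nn_integral_gw_size_powr[OF p a b])
  also have "\<dots> = (\<integral>\<eta>. indicator {0<..1} \<eta> * (b powr (- a) * lower_gamma a (b * ln (gw_R p \<eta>)) / Gamma a) \<partial>lborel)"
    using Gamma_real_pos[OF a]
    by (intro integral_eq_nn_integral[symmetric]) (measurable, simp add: lower_gamma_nonneg)
  finally show ?thesis .
qed

lemma gw_c_eq_Gamma_minus_lower_gamma:
  assumes p: "integrable (measure_pmf p) real" "measure_pmf.expectation p real \<le> 1"
    and "0 < a" "1 \<le> t" "0 < \<eta>" "\<eta> \<le> 1"
  shows "gw_c p \<eta> a t = Gamma a - lower_gamma a ((t - 1) * ln (gw_R p \<eta>))"
  unfolding gw_c_def using assms ln_gw_R_nonneg[OF p, of \<eta>]
  by (intro upper_gamma_eq_Gamma_minus_lower_gamma) simp_all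

lemma interval_integral_zero_one:
  fixes f :: "real \<Rightarrow> real"
  shows "(LBINT x=0..1. f x) = (\<integral>x. indicator {0<..1} x * f x \<partial>lborel)"
  using interval_integral_Ioc[of 0 1 f] by (simp add: set_lebesgue_integral_def zero_ereal_def one_ereal_def)

theorem theoremB1:
  fixes p :: "nat pmf" and \<alpha> t :: real
  assumes "integrable (measure_pmf p) real"
    and "measure_pmf.expectation p real = 1"
    and "integrable (measure_pmf p) (\<lambda>k. (real k)^2)"
    and "measure_pmf.variance p real > 0"
    and "\<alpha> < 0" and "t > 1"
  shows "(\<integral>\<omega>. (if finite (gw_tree \<omega>)
                  then (real (card (gw_tree \<omega>)) - 1 + t) powr \<alpha> else 0) \<partial>gw_space p)
       = (t - 1) powr \<alpha> * (LBINT \<eta>=0..1. 1 - gw_c p \<eta> (- \<alpha>) t / Gamma (- \<alpha>))"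
proof -
  define a b where "a = - \<alpha>" and "b = t - 1"
  have p: "integrable (measure_pmf p) real" "measure_pmf.expectation p real \<le> 1"
    using assms(1,2) by simp_all
  have a: "0 < a" and b: "0 < b"
    using assms(5,6) by (simp_all add: a_def b_def)
  have "(LBINT \<eta>=0..1. 1 - gw_c p \<eta> a t / Gamma a)
      = (\<integral>\<eta>. indicator {0<..1} \<eta> * (lower_gamma a (b * ln (gw_R p \<eta>)) / Gamma a) \<partial>lborel)"
    unfolding interval_integral_zero_one b_def
    using gw_c_eq_Gamma_minus_lower_gamma[OF p a] assms(6) Gamma_real_pos[OF a]
    by (intro Bochner_Integration.integral_cong) (auto simp: indicator_def field_simps)
  then have "(t - 1) powr \<alpha> * (LBINT \<eta>=0..1. 1 - gw_c p \<eta> (- \<alpha>) t / Gamma (- \<alpha>))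
      = (\<integral>\<eta>. indicator {0<..1} \<eta> * (b powr (- a) * lower_gamma a (b * ln (gw_R p \<eta>)) / Gamma a) \<partial>lborel)"
    by (simp add: a_def b_def mult_ac flip: integral_mult_right_zero)
  also have "\<dots> = (\<integral>\<omega>. (if finite (gw_tree \<omega>) then (real (card (gw_tree \<omega>)) + b) powr (- a) else 0) \<partial>gw_space p)"
    by (rule integral_gw_size_powr[OF p a b, symmetric])
  moreover have "(real n + b) powr (- a) = (real n - 1 + t) powr \<alpha>" for n :: nat
    by (simp add: a_def b_def add_diff_eq diff_add_eq)
  ultimately show ?thesis
    by (simp only:)
qed

end
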